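(* Let $s \geq 3$ be a fixed integer. Suppose there are constants $C, c > 0$ such that for every sufficiently large $n$ there exists a $K_s$-free $(n,d,\lambda)$-graph with $\lambda \leq C\sqrt{d}$ and $d \geq c\, n^{1 - \frac{1}{2s-3}}$. Then there is a constant $c' > 0$ (depending on $s$, $C$, $c$) such that for all sufficiently large $t$, \[ r(s,t) \;\geq\; c'\,\frac{t^{s-1}}{(\log t)^{2s-4}}. \]
   Context: For integers $s,t \geq 2$, the Ramsey number $r(s,t)$ is the minimum $n$ such that every $n$-vertex graph contains either a clique of order $s$ or an independent set of size $t$. An $(n,d,\lambda)$-graph is an $n$-vertex $d$-regular graph whose adjacency matrix has eigenvalues $\lambda_1 \geq \lambda_2 \geq \dots \geq \lambda_n$ with $\max\{|\lambda_2|,|\lambda_n|\} = \lambda$. A graph is $K_s$-free if it contains no complete subgraph on $s$ vertices. An $(n,d,\lambda)$-graph with $\lambda = O(\sqrt{d})$ is called spectrally extremal. *)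

theory Defs
  imports Complex_Main "Jordan_Normal_Form.Char_Poly"
begin

definition simple_graph :: "nat \<Rightarrow> (nat \<Rightarrow> nat \<Rightarrow> bool) \<Rightarrow> bool" where
  "simple_graph n E \<longleftrightarrow> (\<forall>u<n. \<forall>v<n. E u v \<longrightarrow> E v u) \<and> (\<forall>v<n. \<not> E v v)"

definition has_clique :: "nat \<Rightarrow> (nat \<Rightarrow> nat \<Rightarrow> bool) \<Rightarrow> nat \<Rightarrow> bool" where
  "has_clique n E s \<longleftrightarrow> (\<exists>S. S \<subseteq> {0..<n} \<and> card S = s \<and> (\<forall>x\<in>S. \<forall>y\<in>S. x \<noteq> y \<longrightarrow> E x y))"

definition has_indep :: "nat \<Rightarrow> (nat \<Rightarrow> nat \<Rightarrow> bool) \<Rightarrow> nat \<Rightarrow> bool" where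
  "has_indep n E t \<longleftrightarrow> (\<exists>S. S \<subseteq> {0..<n} \<and> card S = t \<and> (\<forall>x\<in>S. \<forall>y\<in>S. x \<noteq> y \<longrightarrow> \<not> E x y))"

definition ramsey :: "nat \<Rightarrow> nat \<Rightarrow> nat" where
  "ramsey s t = (LEAST n. \<forall>E. simple_graph n E \<longrightarrow> has_clique n E s \<or> has_indep n E t)"

definition adj_mat :: "nat \<Rightarrow> (nat \<Rightarrow> nat \<Rightarrow> bool) \<Rightarrow> real mat" where
  "adj_mat n E = mat n n (\<lambda>(i,j). if E i j then 1 else 0)"

text \<open>as is the list of eigenvalues (with multiplicity) of the adjacency matrix,
  sorted in non-increasing order: lambda_1 = as!0 \<ge> ... \<ge> lambda_n = as!(n-1).\<close>
definition adj_spectrum :: "nat \<Rightarrow> (nat \<Rightarrow> nat \<Rightarrow> bool) \<Rightarrow> real list \<Rightarrow> bool" where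
  "adj_spectrum n E as \<longleftrightarrow> length as = n \<and> sorted_wrt (\<ge>) as \<and>
     char_poly (adj_mat n E) = (\<Prod>a\<leftarrow>as. [:- a, 1:])"

definition regular :: "nat \<Rightarrow> (nat \<Rightarrow> nat \<Rightarrow> bool) \<Rightarrow> nat \<Rightarrow> bool" where
  "regular n E d \<longleftrightarrow> (\<forall>v<n. card {u. u < n \<and> E v u} = d)"

definition ndl_graph :: "nat \<Rightarrow> nat \<Rightarrow> real \<Rightarrow> (nat \<Rightarrow> nat \<Rightarrow> bool) \<Rightarrow> bool" where
  "ndl_graph n d lam E \<longleftrightarrow> simple_graph n E \<and> regular n E d \<and>
     (\<exists>as. adj_spectrum n E as \<and> lam = max \<bar>as ! 1\<bar> \<bar>as ! (n - 1)\<bar>)"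

end

(* Take a K_s-free (n,d,lambda)-graph with lambda = O(sqrt d) on n ~ (t / log^2 t)^(2s-3) vertices.
   By the expander mixing lemma, in every vertex set R at most (2 lambda n/d)^2 / |R| vertices have
   fewer than d|R|/(2n) neighbours inside R. Choosing the vertices of an independent set one at a
   time, every choice outside these few shrinks the set of remaining candidates by the factor
   1 - d/(2n); this bounds the number of independent t-sets by (2 r)^t n^(O(n log n / d)) / t! with
   r of order lambda n / d. A random set of m ~ n t / r vertices therefore contains on average at
   most one independent t-set, and deleting a vertex from each one leaves a K_s-free graph on m - 1
   vertices without independent t-sets. Hence r(s,t) >= m, which is of order t^(s-1) / log^(2s-4) t.
   The mixing lemma itself rests on tr A^(2k) = sum_i lambda_i^(2k), obtained from a Schur
   decomposition: it bounds A^k on the complement of the all-ones vector, and letting k = 2^j grow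
   gives |A y| <= lambda |y| there. *)

theory Submission
  imports Defs "Jordan_Normal_Form.Schur_Decomposition" "HOL-Library.Ramsey"
    "HOL-Analysis.Harmonic_Numbers" "HOL-Real_Asymp.Real_Asymp"
begin

definition matvec :: "nat \<Rightarrow> real mat \<Rightarrow> (nat \<Rightarrow> real) \<Rightarrow> nat \<Rightarrow> real" where
  "matvec n X y = (\<lambda>i. \<Sum>k<n. X $$ (i,k) * y k)"

definition dot :: "nat \<Rightarrow> (nat \<Rightarrow> real) \<Rightarrow> (nat \<Rightarrow> real) \<Rightarrow> real" where
  "dot n f g = (\<Sum>i<n. f i * g i)"

definition sqnorm :: "nat \<Rightarrow> (nat \<Rightarrow> real) \<Rightarrow> real" where
  "sqnorm n f = (\<Sum>i<n. (f i)\<^sup>2)"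

definition symmetric_mat :: "'a mat \<Rightarrow> bool" where
  "symmetric_mat X \<longleftrightarrow> (\<forall>i<dim_row X. \<forall>k<dim_row X. X $$ (i,k) = X $$ (k,i))"

definition mat_trace :: "'a::comm_monoid_add mat \<Rightarrow> 'a" where
  "mat_trace X = (\<Sum>i<dim_row X. X $$ (i,i))"

lemma index_mult_mat_sum:
  assumes "X \<in> carrier_mat m n" "Y \<in> carrier_mat n p" "i < m" "j < p"
  shows "(X * Y) $$ (i,j) = (\<Sum>k<n. X $$ (i,k) * Y $$ (k,j))"
  using assms by (simp add: scalar_prod_def atLeast0LessThan)

lemma sqnorm_nonneg: "0 \<le> sqnorm n f"
  unfolding sqnorm_def by (simp add: sum_nonneg)

lemma sqnorm_eq_dot: "sqnorm n f = dot n f f"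
  unfolding sqnorm_def dot_def by (simp add: power2_eq_square)

lemma dot_Cauchy_Schwarz: "(dot n f g)\<^sup>2 \<le> sqnorm n f * sqnorm n g"
  unfolding dot_def sqnorm_def by (rule Cauchy_Schwarz_ineq_sum)

lemma sum_lessThan_if_mem:
  fixes n :: nat
  assumes "R \<subseteq> {..<n}"
  shows "(\<Sum>k<n. if k \<in> R then f k else 0) = sum f R"
  using sum.inter_restrict[OF finite_lessThan[of n], of f R] Int_absorb1[OF assms] by simp

lemma matvec_mult:
  assumes "X \<in> carrier_mat n n" "Y \<in> carrier_mat n n" "i < n"
  shows "matvec n (X * Y) y i = matvec n X (matvec n Y y) i"
proof -
  have "matvec n (X * Y) y i = (\<Sum>k<n. (\<Sum>j<n. X $$ (i,j) * Y $$ (j,k)) * y k)"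
    unfolding matvec_def using assms
    by (intro sum.cong refl) (simp add: index_mult_mat_sum del: index_mult_mat(1))
  also have "\<dots> = (\<Sum>j<n. \<Sum>k<n. X $$ (i,j) * (Y $$ (j,k) * y k))"
    by (subst sum.swap) (simp add: sum_distrib_right mult.assoc)
  also have "\<dots> = matvec n X (matvec n Y y) i"
    unfolding matvec_def by (simp add: sum_distrib_left)
  finally show ?thesis .
qed

lemma dot_matvec_symmetric:
  assumes "X \<in> carrier_mat n n" "symmetric_mat X"
  shows "dot n f (matvec n X g) = dot n (matvec n X f) g"
proof -
  have "dot n f (matvec n X g) = (\<Sum>i<n. \<Sum>k<n. f i * X $$ (i,k) * g k)"
    unfolding dot_def matvec_def by (simp add: sum_distrib_left mult.assoc)
  also have "\<dots> = (\<Sum>k<n. \<Sum>i<n. X $$ (k,i) * f i * g k)"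
    using assms unfolding symmetric_mat_def
    by (subst sum.swap) (intro sum.cong refl, simp add: mult.commute)
  also have "\<dots> = dot n (matvec n X f) g"
    unfolding dot_def matvec_def by (simp add: sum_distrib_right)
  finally show ?thesis .
qed

lemma pow_mat_add:
  fixes X :: "'a::semiring_1 mat"
  assumes "X \<in> carrier_mat n n"
  shows "X ^\<^sub>m (a + b) = X ^\<^sub>m a * X ^\<^sub>m b"
proof (induction b)
  case (Suc b)
  have "X ^\<^sub>m (a + Suc b) = (X ^\<^sub>m a * X ^\<^sub>m b) * X" using Suc by simp
  also have "\<dots> = X ^\<^sub>m a * (X ^\<^sub>m b * X)"
    using assms by (intro assoc_mult_mat[of _ n n _ n _ n]) auto
  finally show ?case by simp
qed (use assms in simp)

lemma symmetric_mat_pow: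
  fixes X :: "'a::comm_semiring_1 mat"
  assumes X: "X \<in> carrier_mat n n" and sym: "symmetric_mat X"
  shows "symmetric_mat (X ^\<^sub>m K)"
proof (induction K)
  case 0
  then show ?case by (auto simp: symmetric_mat_def one_mat_def)
next
  case (Suc K)
  have XK: "X ^\<^sub>m K \<in> carrier_mat n n" using X by simp
  have left: "X ^\<^sub>m Suc K = X ^\<^sub>m K * X" by simp
  have right: "X ^\<^sub>m Suc K = X * X ^\<^sub>m K"
    using pow_mat_add[OF X, of 1 K] X by simp
  have "(X ^\<^sub>m Suc K) $$ (i,k) = (X ^\<^sub>m Suc K) $$ (k,i)" if "i < n" "k < n" for i k
  proof -
    have "(X ^\<^sub>m Suc K) $$ (i,k) = (\<Sum>j<n. (X ^\<^sub>m K) $$ (i,j) * X $$ (j,k))"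
      unfolding left using XK X that by (rule index_mult_mat_sum)
    also have "\<dots> = (\<Sum>j<n. X $$ (k,j) * (X ^\<^sub>m K) $$ (j,i))"
      using Suc sym X XK that unfolding symmetric_mat_def
      by (intro sum.cong refl) (simp add: mult.commute)
    also have "\<dots> = (X ^\<^sub>m Suc K) $$ (k,i)"
      unfolding right using X XK that(2,1) by (rule index_mult_mat_sum[symmetric])
    finally show ?thesis .
  qed
  then show ?case using X unfolding symmetric_mat_def by simp
qed

lemma mat_trace_mult_comm:
  fixes X :: "'a::comm_semiring_0 mat"
  assumes X: "X \<in> carrier_mat n m" and Y: "Y \<in> carrier_mat m n"
  shows "mat_trace (X * Y) = mat_trace (Y * X)"
proof -
  have "mat_trace (X * Y) = (\<Sum>i<n. \<Sum>k<m. X $$ (i,k) * Y $$ (k,i))"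
    unfolding mat_trace_def using X Y by (intro sum.cong refl) (simp_all add: index_mult_mat_sum del: index_mult_mat(1))
  also have "\<dots> = (\<Sum>k<m. \<Sum>i<n. Y $$ (k,i) * X $$ (i,k))"
    by (subst sum.swap) (simp add: mult.commute)
  also have "\<dots> = mat_trace (Y * X)"
    unfolding mat_trace_def using X Y by (intro sum.cong refl) (simp_all add: index_mult_mat_sum del: index_mult_mat(1))
  finally show ?thesis .
qed

lemma mat_trace_square_symmetric:
  fixes X :: "'a::comm_semiring_1 mat"
  assumes X: "X \<in> carrier_mat n n" and sym: "symmetric_mat X"
  shows "mat_trace (X * X) = (\<Sum>i<n. \<Sum>k<n. (X $$ (i,k))\<^sup>2)"
  unfolding mat_trace_def using X sym unfolding symmetric_mat_def
  by (auto simp: index_mult_mat_sum power2_eq_square simp del: index_mult_mat(1) intro!: sum.cong)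

lemma upper_triangular_mult:
  fixes A :: "'a::semiring_0 mat"
  assumes A: "A \<in> carrier_mat n n" "upper_triangular A" and B: "B \<in> carrier_mat n n" "upper_triangular B"
  shows "upper_triangular (A * B)"
proof
  fix i j assume ij: "j < i" "i < dim_row (A * B)"
  have "A $$ (i,k) * B $$ (k,j) = 0" if "k < n" for k
    using ij A B that upper_triangularD[OF A(2), of k i] upper_triangularD[OF B(2), of j k]
    by (cases "k < i") auto
  then show "(A * B) $$ (i,j) = 0"
    using ij A B by (simp add: index_mult_mat_sum del: index_mult_mat(1))
qed

lemma index_mult_upper_triangular_diag:
  fixes A :: "'a::semiring_0 mat"
  assumes A: "A \<in> carrier_mat n n" "upper_triangular A" and B: "B \<in> carrier_mat n n" "upper_triangular B"
    and i: "i < n"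
  shows "(A * B) $$ (i,i) = A $$ (i,i) * B $$ (i,i)"
proof -
  have "A $$ (i,k) * B $$ (k,i) = 0" if "k < n" "k \<noteq> i" for k
    using A B i that upper_triangularD[OF A(2), of k i] upper_triangularD[OF B(2), of i k]
    by (cases "k < i") auto
  then have "(\<Sum>k<n. A $$ (i,k) * B $$ (k,i)) = A $$ (i,i) * B $$ (i,i)"
    using i by (subst sum.remove[of _ i]) auto
  then show ?thesis using A B i by (simp add: index_mult_mat_sum del: index_mult_mat(1))
qed

lemma upper_triangular_pow:
  fixes B :: "'a::semiring_1 mat"
  assumes "B \<in> carrier_mat n n" "upper_triangular B"
  shows "upper_triangular (B ^\<^sub>m K) \<and> (\<forall>i<n. (B ^\<^sub>m K) $$ (i,i) = (B $$ (i,i)) ^ K)"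
proof (induction K)
  case (Suc K)
  then show ?case
    using assms upper_triangular_mult[of "B ^\<^sub>m K" n B] index_mult_upper_triangular_diag[of "B ^\<^sub>m K" n B]
    by (simp add: power_commutes)
qed (use assms in auto)

lemma mat_trace_pow_eq_sum_eigenvalues:
  fixes A :: "'a::conjugatable_ordered_field mat"
  assumes A: "A \<in> carrier_mat n n" and cp: "char_poly A = (\<Prod>a\<leftarrow>as. [:- a, 1:])"
  shows "mat_trace (A ^\<^sub>m K) = (\<Sum>i<n. (as ! i) ^ K)"
proof -
  obtain B P Q where "schur_decomposition A as = (B,P,Q)"
    by (cases "schur_decomposition A as") auto
  from schur_decomposition[OF A cp this]
  have sim: "similar_mat_wit A B P Q" and ut: "upper_triangular B" and diag: "diag_mat B = as"
    by auto
  note W = similar_mat_witD2[OF A sim]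
  have BK: "B ^\<^sub>m K \<in> carrier_mat n n" using W by auto
  have "mat_trace (A ^\<^sub>m K) = mat_trace (P * B ^\<^sub>m K * Q)"
    by (simp add: similar_mat_wit_pow_id[OF sim])
  also have "\<dots> = mat_trace (Q * (P * B ^\<^sub>m K))"
    using W BK by (intro mat_trace_mult_comm[of _ n n]) auto
  also have "Q * (P * B ^\<^sub>m K) = B ^\<^sub>m K"
    using W BK by (simp add: assoc_mult_mat[symmetric, of Q n n P n "B ^\<^sub>m K" n])
  also have "mat_trace (B ^\<^sub>m K) = (\<Sum>i<n. (as ! i) ^ K)"
    unfolding mat_trace_def using upper_triangular_pow[OF W(5) ut, of K] W(5) diag
    by (intro sum.cong refl) (auto simp: diag_mat_def)
  finally show ?thesis .
qed

section \<open>Adjacency matrices of regular graphs\<close>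

lemma dim_adj_mat [simp]: "dim_row (adj_mat n E) = n" "dim_col (adj_mat n E) = n"
  unfolding adj_mat_def by simp_all

lemma adj_mat_carrier [simp]: "adj_mat n E \<in> carrier_mat n n"
  by (simp add: carrier_matI)

lemma index_adj_mat: "i < n \<Longrightarrow> j < n \<Longrightarrow> adj_mat n E $$ (i,j) = (if E i j then 1 else 0)"
  unfolding adj_mat_def by simp

lemma symmetric_adj_mat: "simple_graph n E \<Longrightarrow> symmetric_mat (adj_mat n E)"
  unfolding simple_graph_def symmetric_mat_def by (auto simp: index_adj_mat)

lemma adj_mat_row_sum:
  assumes "regular n E d" "i < n"
  shows "(\<Sum>k<n. adj_mat n E $$ (i,k)) = real d"
proof -
  have "(\<Sum>k<n. adj_mat n E $$ (i,k)) = (\<Sum>k<n. if E i k then 1 else 0)"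
    using assms by (intro sum.cong) (auto simp: index_adj_mat)
  also have "\<dots> = real (card {u. u < n \<and> E i u})"
    by (simp add: sum.If_cases lessThan_def Collect_conj_eq)
  finally show ?thesis using assms unfolding regular_def by simp
qed

lemma adj_mat_pow_row_sum:
  assumes "regular n E d" "i < n"
  shows "(\<Sum>k<n. (adj_mat n E ^\<^sub>m K) $$ (i,k)) = real d ^ K"
  using assms(2)
proof (induction K arbitrary: i)
  case 0
  then show ?case by (simp add: one_mat_def sum.If_cases)
next
  case (Suc K)
  let ?A = "adj_mat n E"
  have "(\<Sum>k<n. (?A ^\<^sub>m Suc K) $$ (i,k)) = (\<Sum>k<n. \<Sum>j<n. (?A ^\<^sub>m K) $$ (i,j) * ?A $$ (j,k))"
    using Suc.prems index_mult_mat_sum[OF pow_carrier_mat[OF adj_mat_carrier] adj_mat_carrier]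
    by (intro sum.cong refl) simp
  also have "\<dots> = (\<Sum>j<n. (?A ^\<^sub>m K) $$ (i,j) * real d)"
    using adj_mat_row_sum[OF assms(1)]
    by (subst sum.swap) (simp add: sum_distrib_left[symmetric])
  also have "\<dots> = real d ^ Suc K"
    using Suc by (simp add: sum_distrib_right[symmetric])
  finally show ?case .
qed

lemma abs_eigenvalue_le_degree:
  assumes rg: "regular n E d" and sp: "adj_spectrum n E as" and i: "i < n"
  shows "\<bar>as ! i\<bar> \<le> real d"
proof -
  let ?A = "adj_mat n E" and ?k = "as ! i"
  have "poly (char_poly ?A) ?k = 0"
    using sp i unfolding adj_spectrum_def by (auto simp: poly_prod_list_zero_iff)
  then have "eigenvalue ?A ?k"
    using eigenvalue_root_char_poly[OF adj_mat_carrier] by simp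
  then obtain v where "eigenvector ?A v ?k"
    unfolding eigenvalue_def by auto
  then have v: "v \<in> carrier_vec n" "v \<noteq> 0\<^sub>v n" "?A *\<^sub>v v = ?k \<cdot>\<^sub>v v"
    unfolding eigenvector_def by auto
  define m where "m = Max ((\<lambda>l. \<bar>v $ l\<bar>) ` {..<n})"
  obtain j where j: "j < n" "\<bar>v $ j\<bar> = m"
    using Max_in[of "(\<lambda>l. \<bar>v $ l\<bar>) ` {..<n}"] i unfolding m_def by fastforce
  have le_m: "\<bar>v $ l\<bar> \<le> m" if "l < n" for l
    unfolding m_def using that by (intro Max_ge) auto
  have "m > 0"
  proof (rule ccontr)
    assume "\<not> m > 0"
    then have "v = 0\<^sub>v n" using le_m v(1) by (intro eq_vecI) force+
    then show False using v(2) by simp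
  qed
  have "?k * v $ j = (?A *\<^sub>v v) $ j"
    using v j(1) by simp
  also have "\<dots> = (\<Sum>l<n. ?A $$ (j,l) * v $ l)"
    using v(1) j(1) by (simp add: scalar_prod_def atLeast0LessThan)
  finally have "\<bar>?k\<bar> * m = \<bar>\<Sum>l<n. ?A $$ (j,l) * v $ l\<bar>"
    using j(2) by (metis abs_mult)
  also have "\<dots> \<le> (\<Sum>l<n. \<bar>?A $$ (j,l) * v $ l\<bar>)"
    by (rule sum_abs)
  also have "\<dots> \<le> (\<Sum>l<n. ?A $$ (j,l) * m)"
    using le_m j(1) by (intro sum_mono) (simp add: index_adj_mat abs_mult)
  also have "\<dots> = real d * m"
    using adj_mat_row_sum[OF rg j(1)] by (simp add: sum_distrib_right[symmetric])
  finally show ?thesis using \<open>m > 0\<close> by simp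
qed

lemma sum_pow_spectrum_le:
  assumes rg: "regular n E d" and sp: "adj_spectrum n E as"
    and lam: "lam = max \<bar>as ! 1\<bar> \<bar>as ! (n - 1)\<bar>" and n: "2 \<le> n"
  shows "(\<Sum>i<n. (as ! i) ^ (2*K)) \<le> real d ^ (2*K) + real (n - 1) * lam ^ (2*K)"
proof -
  have len: "length as = n" and sorted: "sorted_wrt (\<ge>) as"
    using sp unfolding adj_spectrum_def by auto
  have "\<bar>as ! i\<bar> \<le> lam" if "1 \<le> i" "i < n" for i
  proof -
    have "as ! i \<le> as ! 1" "as ! (n - 1) \<le> as ! i"
      using that len sorted_wrt_nth_less[OF sorted, of 1 i] sorted_wrt_nth_less[OF sorted, of i "n - 1"]
      by (cases "i = 1"; cases "i = n - 1"; simp)+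
    then show ?thesis unfolding lam by linarith
  qed
  then have tail: "(as ! i) ^ (2*K) \<le> lam ^ (2*K)" if "i \<in> {1..<n}" for i
    using that power_mono[OF _ abs_ge_zero, of "as ! i" lam "2*K"] by (simp add: power_even_abs)
  have head: "(as ! 0) ^ (2*K) \<le> real d ^ (2*K)"
    using abs_eigenvalue_le_degree[OF rg sp, of 0] n power_mono[OF _ abs_ge_zero, of "as ! 0" "real d" "2*K"]
    by (simp add: power_even_abs)
  have "{..<n} = insert 0 {1..<n}" using n by auto
  then have "(\<Sum>i<n. (as ! i) ^ (2*K)) = (as ! 0) ^ (2*K) + (\<Sum>i\<in>{1..<n}. (as ! i) ^ (2*K))"
    by simp
  also have "\<dots> \<le> real d ^ (2*K) + (\<Sum>i\<in>{1..<n}. lam ^ (2*K))"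
    using head tail by (intro add_mono sum_mono) auto
  finally show ?thesis by simp
qed

section \<open>The expander mixing lemma\<close>

lemma sum_power2_diff_mean:
  fixes p :: "nat \<Rightarrow> real"
  assumes "0 < n"
  shows "(\<Sum>k<n. (p k - (\<Sum>l<n. p l) / n)\<^sup>2) = (\<Sum>k<n. (p k)\<^sup>2) - (\<Sum>k<n. p k)\<^sup>2 / n"
proof -
  define S where "S = (\<Sum>l<n. p l)"
  define c where "c = S / n"
  have "(\<Sum>k<n. (p k - c)\<^sup>2) = (\<Sum>k<n. (p k)\<^sup>2 - 2 * c * p k + c\<^sup>2)"
    by (intro sum.cong refl) (simp add: power2_diff algebra_simps)
  also have "\<dots> = (\<Sum>k<n. (p k)\<^sup>2) - 2 * c * S + n * c\<^sup>2"
    by (simp add: S_def sum.distrib sum_subtractf sum_distrib_left)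
  finally show ?thesis
    using assms unfolding c_def S_def[symmetric] by (simp add: power2_eq_square field_simps)
qed

lemma sqnorm_adj_mat_pow_le:
  assumes sg: "simple_graph n E" and rg: "regular n E d" and sp: "adj_spectrum n E as"
    and lam: "lam = max \<bar>as ! 1\<bar> \<bar>as ! (n - 1)\<bar>" and n: "2 \<le> n"
    and y0: "(\<Sum>k<n. y k) = 0"
  shows "sqnorm n (matvec n (adj_mat n E ^\<^sub>m K) y) \<le> real n * lam ^ (2*K) * sqnorm n y"
proof -
  let ?A = "adj_mat n E"
  let ?P = "?A ^\<^sub>m K"
  define c where "c = real d ^ K / real n"
  have row: "(\<Sum>k<n. ?P $$ (i,k)) = real d ^ K" if "i < n" for i
    using adj_mat_pow_row_sum[OF rg that] .
  have centered: "matvec n ?P y i = (\<Sum>k<n. (?P $$ (i,k) - c) * y k)" for i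
  proof -
    have "(\<Sum>k<n. (?P $$ (i,k) - c) * y k) = (\<Sum>k<n. ?P $$ (i,k) * y k) - c * (\<Sum>k<n. y k)"
      by (simp add: algebra_simps sum_subtractf sum_distrib_left)
    then show ?thesis unfolding matvec_def using y0 by simp
  qed
  have "sqnorm n (matvec n ?P y) \<le> (\<Sum>i<n. (\<Sum>k<n. (?P $$ (i,k) - c)\<^sup>2) * sqnorm n y)"
    unfolding sqnorm_def centered by (intro sum_mono Cauchy_Schwarz_ineq_sum)
  also have "\<dots> = (\<Sum>i<n. \<Sum>k<n. (?P $$ (i,k) - c)\<^sup>2) * sqnorm n y"
    by (simp add: sum_distrib_right)
  also have "(\<Sum>i<n. \<Sum>k<n. (?P $$ (i,k) - c)\<^sup>2) = mat_trace (?A ^\<^sub>m (2*K)) - real d ^ (2*K)"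
  proof -
    have dK: "(real d ^ K)\<^sup>2 = real d ^ (2*K)"
      by (simp add: power_mult mult.commute flip: power_mult)
    have "(\<Sum>k<n. (?P $$ (i,k) - c)\<^sup>2) = (\<Sum>k<n. (?P $$ (i,k))\<^sup>2) - real d ^ (2*K) / real n"
      if "i < n" for i
      using sum_power2_diff_mean[of n "\<lambda>k. ?P $$ (i,k)"] n row[OF that] dK unfolding c_def by simp
    moreover have "mat_trace (?A ^\<^sub>m (2*K)) = (\<Sum>i<n. \<Sum>k<n. (?P $$ (i,k))\<^sup>2)"
      using mat_trace_square_symmetric[OF pow_carrier_mat[OF adj_mat_carrier]
          symmetric_mat_pow[OF adj_mat_carrier symmetric_adj_mat[OF sg]]]
        pow_mat_add[OF adj_mat_carrier[of n E], of K K]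
      by (simp add: mult_2)
    ultimately show ?thesis using n by (simp add: sum_subtractf)
  qed
  also have "mat_trace (?A ^\<^sub>m (2*K)) = (\<Sum>i<n. (as ! i) ^ (2*K))"
    using sp unfolding adj_spectrum_def by (intro mat_trace_pow_eq_sum_eigenvalues) auto
  also have "((\<Sum>i<n. (as ! i) ^ (2*K)) - real d ^ (2*K)) * sqnorm n y
      \<le> (real (n - 1) * lam ^ (2*K)) * sqnorm n y"
    using sum_pow_spectrum_le[OF rg sp lam n, of K] sqnorm_nonneg by (intro mult_right_mono) auto
  also have "\<dots> \<le> real n * lam ^ (2*K) * sqnorm n y"
    using sqnorm_nonneg[of n y] by (intro mult_right_mono) (auto simp: power_mult)
  finally show ?thesis .
qed

lemma sqnorm_matvec_square_le:
  assumes X: "X \<in> carrier_mat n n" and sym: "symmetric_mat X"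
  shows "(sqnorm n (matvec n X y))\<^sup>2 \<le> sqnorm n y * sqnorm n (matvec n (X * X) y)"
proof -
  have "sqnorm n (matvec n X y) = dot n y (matvec n X (matvec n X y))"
    unfolding sqnorm_eq_dot using dot_matvec_symmetric[OF X sym, of y "matvec n X y"] by simp
  also have "\<dots> = dot n y (matvec n (X * X) y)"
    unfolding dot_def using matvec_mult[OF X X] by (intro sum.cong refl) simp
  finally show ?thesis using dot_Cauchy_Schwarz by simp
qed

lemma sqnorm_matvec_pow2_le:
  assumes X: "X \<in> carrier_mat n n" and sym: "symmetric_mat X"
  shows "sqnorm n (matvec n X y) ^ 2^j \<le> sqnorm n (matvec n (X ^\<^sub>m 2^j) y) * sqnorm n y ^ (2^j - 1)"
proof (induction j)
  case 0
  then show ?case using X by simp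
next
  case (Suc j)
  define K where "K = (2::nat) ^ j"
  let ?a = "sqnorm n (matvec n X y)" and ?b = "sqnorm n (matvec n (X ^\<^sub>m K) y)"
    and ?c = "sqnorm n y" and ?d = "sqnorm n (matvec n (X ^\<^sub>m (2*K)) y)"
  have sq: "?b\<^sup>2 \<le> ?c * ?d"
    using sqnorm_matvec_square_le[OF pow_carrier_mat[OF X] symmetric_mat_pow[OF X sym], of K y]
      pow_mat_add[OF X, of K K] by (simp add: mult_2)
  have "?a ^ 2^Suc j = (?a ^ K)\<^sup>2"
    unfolding K_def by (simp add: power_mult[symmetric] mult.commute)
  also have "\<dots> \<le> (?b * ?c ^ (K - 1))\<^sup>2"
    using Suc.IH sqnorm_nonneg unfolding K_def by (intro power_mono) auto
  also have "\<dots> = ?b\<^sup>2 * ?c ^ (2*K - 2)"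
  proof -
    have "(?c ^ (K - 1))\<^sup>2 = ?c ^ ((K - 1) * 2)" by (simp add: power_mult)
    also have "(K - 1) * 2 = 2*K - 2" by simp
    finally show ?thesis by (simp add: power_mult_distrib)
  qed
  also have "\<dots> \<le> (?c * ?d) * ?c ^ (2*K - 2)"
    using sq sqnorm_nonneg by (intro mult_right_mono) auto
  also have "\<dots> = ?d * ?c ^ (2*K - 1)"
  proof -
    have "1 \<le> K" unfolding K_def by simp
    then have "2*K - 1 = Suc (2*K - 2)" by simp
    then show ?thesis by (simp add: mult.commute mult.left_commute)
  qed
  finally show ?case unfolding K_def by (simp add: mult.commute)
qed

lemma le_of_pow2_le_mult:
  fixes a b c :: real
  assumes b: "0 \<le> b" and pow: "\<And>j. a ^ 2^j \<le> c * b ^ 2^j"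
  shows "a \<le> b"
proof (rule ccontr)
  assume "\<not> a \<le> b"
  then have ab: "b < a" by simp
  show False
  proof (cases "b = 0")
    case True
    then show False using pow[of 0] ab by simp
  next
    case False
    then have bp: "0 < b" using b by simp
    define x where "x = a / b - 1"
    have xp: "0 < x" using ab bp by (simp add: x_def field_simps)
    obtain N where N: "c / x < real N" using reals_Archimedean2 by blast
    have "1 + real (2^N) * x \<le> (1 + x) ^ 2^N"
      using xp by (intro Bernoulli_inequality) simp
    also have "\<dots> = a ^ 2^N / b ^ 2^N"
      by (simp add: x_def power_divide)
    also have "\<dots> \<le> c"
      using pow[of N] bp by (simp add: divide_le_eq)
    finally have "real (2^N) * x < c" by simp
    moreover have "real N * x \<le> real (2^N) * x"
      using xp by (intro mult_right_mono) (simp_all add: less_exp less_imp_le)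
    moreover have "c < real N * x" using N xp by (simp add: divide_less_eq)
    ultimately show False by linarith
  qed
qed

lemma sqnorm_adj_mat_le:
  assumes sg: "simple_graph n E" and rg: "regular n E d" and sp: "adj_spectrum n E as"
    and lam: "lam = max \<bar>as ! 1\<bar> \<bar>as ! (n - 1)\<bar>" and n: "2 \<le> n"
    and y0: "(\<Sum>k<n. y k) = 0"
  shows "sqnorm n (matvec n (adj_mat n E) y) \<le> lam\<^sup>2 * sqnorm n y"
proof (rule le_of_pow2_le_mult)
  show "0 \<le> lam\<^sup>2 * sqnorm n y" using sqnorm_nonneg by simp
  fix j
  let ?A = "adj_mat n E" and ?c = "sqnorm n y"
  have "sqnorm n (matvec n ?A y) ^ 2^j \<le> sqnorm n (matvec n (?A ^\<^sub>m 2^j) y) * ?c ^ (2^j - 1)"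
    by (rule sqnorm_matvec_pow2_le[OF adj_mat_carrier symmetric_adj_mat[OF sg]])
  also have "\<dots> \<le> (real n * lam ^ (2 * 2^j) * ?c) * ?c ^ (2^j - 1)"
    using sqnorm_adj_mat_pow_le[OF sg rg sp lam n y0] sqnorm_nonneg by (intro mult_right_mono) auto
  also have "\<dots> = real n * (lam\<^sup>2 * ?c) ^ 2^j"
  proof -
    have "?c * ?c ^ (2^j - 1) = ?c ^ 2^j"
      by (metis One_nat_def Suc_pred pos2 power_Suc zero_less_power)
    then show ?thesis by (simp add: power_mult power_mult_distrib mult.assoc)
  qed
  finally show "sqnorm n (matvec n ?A y) ^ 2^j \<le> real n * (lam\<^sup>2 * ?c) ^ 2^j" .
qed

definition edge_count :: "(nat \<Rightarrow> nat \<Rightarrow> bool) \<Rightarrow> nat set \<Rightarrow> nat set \<Rightarrow> real" where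
  "edge_count E B R = (\<Sum>b\<in>B. real (card {r \<in> R. E b r}))"

lemma centered_indicator:
  fixes n :: nat
  assumes R: "R \<subseteq> {..<n}" and n: "0 < n"
  defines "y \<equiv> \<lambda>k. (if k \<in> R then 1 else 0) - card R / real n"
  shows "(\<Sum>k<n. y k) = 0" "sqnorm n y \<le> card R"
proof -
  define c where "c = card R / real n"
  have sumR: "(\<Sum>k<n. if k \<in> R then 1 else 0) = real (card R)"
    using sum_lessThan_if_mem[OF R, of "\<lambda>_. 1::real"] by simp
  show "(\<Sum>k<n. y k) = 0"
    unfolding y_def using n by (simp add: sum_subtractf sumR)
  have "sqnorm n y = (\<Sum>k<n. (if k \<in> R then 1 else 0) - 2 * c * (if k \<in> R then 1 else 0) + c\<^sup>2)"
    unfolding sqnorm_def y_def c_def by (intro sum.cong refl) (auto simp: power2_eq_square algebra_simps)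
  also have "\<dots> = card R - 2 * c * card R + n * c\<^sup>2"
    by (simp add: sum.distrib sum_subtractf sum_distrib_left[symmetric] sumR)
  also have "\<dots> = card R - card R * c"
    unfolding c_def using n by (simp add: power2_eq_square field_simps)
  finally show "sqnorm n y \<le> card R" unfolding c_def by simp
qed

lemma matvec_adj_mat_centered_indicator:
  fixes c :: real
  assumes rg: "regular n E d" and R: "R \<subseteq> {..<n}" and i: "i < n"
  shows "matvec n (adj_mat n E) (\<lambda>k. (if k \<in> R then 1 else 0) - c) i = card {r \<in> R. E i r} - c * d"
proof -
  let ?A = "adj_mat n E"
  have "matvec n ?A (\<lambda>k. (if k \<in> R then 1 else 0) - c) i
      = (\<Sum>k<n. (if k \<in> R then ?A $$ (i,k) else 0) - c * ?A $$ (i,k))"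
    unfolding matvec_def by (intro sum.cong refl) (auto simp: algebra_simps)
  also have "\<dots> = (\<Sum>k<n. if k \<in> R then ?A $$ (i,k) else 0) - c * (\<Sum>k<n. ?A $$ (i,k))"
    by (simp add: sum_subtractf sum_distrib_left)
  also have "(\<Sum>k<n. if k \<in> R then ?A $$ (i,k) else 0) = (\<Sum>k\<in>R. if E i k then 1 else 0)"
    using R i by (simp add: sum_lessThan_if_mem index_adj_mat subset_eq)
  also have "\<dots> = card {r \<in> R. E i r}"
    using sum.inter_filter[OF finite_subset[OF R finite_lessThan], of "\<lambda>_. 1::real" "E i"] by simp
  finally show ?thesis using adj_mat_row_sum[OF rg i] by simp
qed

lemma expander_mixing:
  assumes G: "ndl_graph n d lam E" and n: "2 \<le> n" and B: "B \<subseteq> {..<n}" and R: "R \<subseteq> {..<n}"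
  shows "\<bar>edge_count E B R - real d / real n * card B * card R\<bar> \<le> lam * sqrt (card B * card R)"
proof -
  obtain as where sg: "simple_graph n E" and rg: "regular n E d" and sp: "adj_spectrum n E as"
    and lam: "lam = max \<bar>as ! 1\<bar> \<bar>as ! (n - 1)\<bar>"
    using G unfolding ndl_graph_def by auto
  let ?A = "adj_mat n E"
  define c where "c = card R / real n"
  define x where "x = (\<lambda>k. if k \<in> B then (1::real) else 0)"
  define y where "y = (\<lambda>k. (if k \<in> R then 1 else 0) - c)"
  have y: "(\<Sum>k<n. y k) = 0" "sqnorm n y \<le> card R"
    using centered_indicator[OF R] n unfolding y_def c_def by auto
  have sqnorm_x: "sqnorm n x = card B"
    unfolding sqnorm_def x_def using sum_lessThan_if_mem[OF B, of "\<lambda>_. 1::real"]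
    by (simp add: if_distrib[of "\<lambda>t. t\<^sup>2"] cong: if_cong)
  have "dot n x (matvec n ?A y) = (\<Sum>i<n. if i \<in> B then matvec n ?A y i else 0)"
    unfolding dot_def x_def by (intro sum.cong refl) auto
  also have "\<dots> = (\<Sum>i\<in>B. matvec n ?A y i)"
    by (rule sum_lessThan_if_mem[OF B])
  also have "\<dots> = (\<Sum>i\<in>B. card {r \<in> R. E i r} - c * d)"
    using B matvec_adj_mat_centered_indicator[OF rg R] unfolding y_def by (intro sum.cong refl) auto
  finally have dot_xy: "dot n x (matvec n ?A y) = edge_count E B R - real d / real n * card B * card R"
    unfolding edge_count_def c_def by (simp add: sum_subtractf)
  have "(dot n x (matvec n ?A y))\<^sup>2 \<le> sqnorm n x * sqnorm n (matvec n ?A y)"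
    by (rule dot_Cauchy_Schwarz)
  also have "\<dots> \<le> card B * (lam\<^sup>2 * sqnorm n y)"
    unfolding sqnorm_x using sqnorm_adj_mat_le[OF sg rg sp lam n y(1)] by (intro mult_left_mono) auto
  also have "\<dots> \<le> card B * (lam\<^sup>2 * card R)"
    using y(2) by (intro mult_left_mono) auto
  also have "\<dots> = (lam * sqrt (card B * card R))\<^sup>2"
    by (simp add: power_mult_distrib)
  finally have "\<bar>dot n x (matvec n ?A y)\<bar>\<^sup>2 \<le> (lam * sqrt (card B * card R))\<^sup>2"
    by simp
  moreover have "0 \<le> lam * sqrt (card B * card R)"
    using lam by simp
  ultimately show ?thesis
    unfolding dot_xy[symmetric] by (rule power2_le_imp_le)
qed

section \<open>Counting independent sets in graphs with few low-degree vertices\<close>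

definition indep_sets :: "('a \<Rightarrow> 'a \<Rightarrow> bool) \<Rightarrow> 'a set \<Rightarrow> nat \<Rightarrow> 'a set set" where
  "indep_sets E R j = {I. I \<subseteq> R \<and> card I = j \<and> (\<forall>x\<in>I. \<forall>y\<in>I. x \<noteq> y \<longrightarrow> \<not> E x y)}"

definition non_nbrs :: "('a \<Rightarrow> 'a \<Rightarrow> bool) \<Rightarrow> 'a set \<Rightarrow> 'a \<Rightarrow> 'a set" where
  "non_nbrs E R v = {u \<in> R. u \<noteq> v \<and> \<not> E v u}"

text \<open>With \<open>D = d/n\<close> the edge density, these are the vertices of \<open>R\<close> having less than half
  of their expected number of neighbours in \<open>R\<close>.\<close>

definition low_degree_vertices :: "('a \<Rightarrow> 'a \<Rightarrow> bool) \<Rightarrow> real \<Rightarrow> 'a set \<Rightarrow> 'a set" where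
  "low_degree_vertices E D R = {v \<in> R. real (card {u \<in> R. E v u}) < D * card R / 2}"

lemma finite_indep_sets: "finite R \<Longrightarrow> finite (indep_sets E R j)"
  unfolding indep_sets_def by (rule finite_subset[of _ "Pow R"]) auto

lemma card_indep_sets_Suc_le:
  assumes R: "finite R"
  shows "real (Suc j) * card (indep_sets E R (Suc j)) \<le> (\<Sum>v\<in>R. real (card (indep_sets E (non_nbrs E R v) j)))"
proof -
  let ?F = "indep_sets E R (Suc j)"
  have "real (Suc j) * card ?F = (\<Sum>I\<in>?F. real (card I))"
    unfolding indep_sets_def by simp
  also have "\<dots> = (\<Sum>I\<in>?F. \<Sum>v\<in>R. if v \<in> I then 1 else 0)"
  proof (intro sum.cong refl)
    fix I assume "I \<in> ?F"
    then have "R \<inter> I = I" by (auto simp: indep_sets_def)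
    then show "real (card I) = (\<Sum>v\<in>R. if v \<in> I then 1 else 0)"
      using sum.inter_restrict[OF R, of "\<lambda>_. 1::real" I] by simp
  qed
  also have "\<dots> = (\<Sum>v\<in>R. real (card {I \<in> ?F. v \<in> I}))"
    using sum.inter_filter[OF finite_indep_sets[OF R], of "\<lambda>_. 1::real"]
    by (subst sum.swap) simp
  also have "\<dots> \<le> (\<Sum>v\<in>R. real (card (indep_sets E (non_nbrs E R v) j)))"
  proof (intro sum_mono of_nat_mono card_inj_on_le)
    fix v assume "v \<in> R"
    show "inj_on (\<lambda>I. I - {v}) {I \<in> ?F. v \<in> I}"
      by (rule inj_onI) blast
    show "(\<lambda>I. I - {v}) ` {I \<in> ?F. v \<in> I} \<subseteq> indep_sets E (non_nbrs E R v) j"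
      using R by (auto simp: indep_sets_def non_nbrs_def intro: finite_subset)
    show "finite (indep_sets E (non_nbrs E R v) j)"
      using R by (intro finite_indep_sets) (simp add: non_nbrs_def)
  qed
  finally show ?thesis .
qed

lemma card_non_nbrs_le:
  assumes R: "finite R" and v: "v \<in> R - low_degree_vertices E D R"
  shows "real (card (non_nbrs E R v)) \<le> card R * (1 - D/2)"
proof -
  have "non_nbrs E R v \<subseteq> R - {u \<in> R. E v u}" unfolding non_nbrs_def by auto
  then have "card (non_nbrs E R v) \<le> card (R - {u \<in> R. E v u})"
    using R by (intro card_mono) auto
  also have "\<dots> = card R - card {u \<in> R. E v u}"
    using R by (intro card_Diff_subset) auto
  finally have "real (card (non_nbrs E R v)) \<le> real (card R) - card {u \<in> R. E v u}"
    using card_mono[OF R, of "{u \<in> R. E v u}"] by auto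
  also have "\<dots> \<le> card R * (1 - D/2)"
    using v by (auto simp: low_degree_vertices_def algebra_simps not_less)
  finally show ?thesis .
qed

text \<open>\<open>shrink_steps r\<^sub>0 g x\<close> bounds the number of times \<open>x\<close> can be multiplied by \<open>e\<^sup>-\<^sup>g\<close>
  before it drops below \<open>r\<^sub>0\<close>.\<close>

definition shrink_steps :: "real \<Rightarrow> real \<Rightarrow> real \<Rightarrow> real" where
  "shrink_steps r0 g x = (if x < r0 then 0 else 1 + ln (x / r0) / g)"

lemma shrink_steps_nonneg: "0 < r0 \<Longrightarrow> 0 < g \<Longrightarrow> 0 \<le> shrink_steps r0 g x"
  unfolding shrink_steps_def by auto

lemma shrink_steps_mono:
  assumes "0 < r0" "0 < g" "x \<le> y"
  shows "shrink_steps r0 g x \<le> shrink_steps r0 g y"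
  using assms shrink_steps_nonneg[OF assms(1,2), of y]
  unfolding shrink_steps_def by (auto simp: divide_right_mono)

lemma shrink_steps_mult_le:
  assumes r0: "0 < r0" and q: "0 < q" "q < 1" and y: "r0 \<le> y" and x: "x \<le> y * q"
  shows "shrink_steps r0 (- ln q) x \<le> shrink_steps r0 (- ln q) y - 1"
proof (cases "x < r0")
  case True
  have "0 \<le> ln (y / r0)" using y r0 by simp
  moreover have "ln q < 0" using q by simp
  ultimately show ?thesis using True y unfolding shrink_steps_def by (simp add: divide_nonneg_neg)
next
  case False
  then have "ln (x / r0) \<le> ln (y * q / r0)"
    using x r0 by (simp add: divide_right_mono)
  also have "\<dots> = ln (y / r0) + ln q"
    using q y r0 by (simp add: ln_mult ln_div)
  finally have "ln (x / r0) / - ln q \<le> (ln (y / r0) + ln q) / - ln q"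
    using q by (intro divide_right_mono) auto
  also have "\<dots> = ln (y / r0) / - ln q - 1"
    using q by (simp add: field_simps)
  finally show ?thesis using False y unfolding shrink_steps_def by simp
qed

text \<open>There are at most \<open>r\<^sub>0\<close> low-degree vertices, and for them \<open>h\<close> does not increase; for every
  other vertex \<open>h\<close> drops by one, which gains the factor \<open>P = |V|/r\<^sub>0\<close>.\<close>

lemma sum_powr_shrink_steps_non_nbrs_le:
  fixes V :: "'a set" and r0 D :: real
  defines "P \<equiv> real (card V) / r0" and "h \<equiv> shrink_steps r0 (- ln (1 - D/2))"
  assumes V: "finite V" and D: "0 < D" "D < 2" and r0: "1 \<le> r0" "r0 \<le> card V"
    and sparse: "real (card (low_degree_vertices E D R)) * card R \<le> r0\<^sup>2"
    and R: "R \<subseteq> V"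
  shows "(\<Sum>v\<in>R. P powr h (card (non_nbrs E R v))) \<le> 2 * r0 * P powr h (card R)"
proof -
  have g: "0 < - ln (1 - D/2)" using D by simp
  have P: "1 \<le> P" unfolding P_def using r0 by simp
  have finR: "finite R" using R V finite_subset by blast
  have non_nbrs_le: "real (card (non_nbrs E R v)) \<le> card R" for v
    using card_mono[OF finR] by (simp add: non_nbrs_def)
  show ?thesis
  proof (cases "card R < r0")
    case True
    then have "h (card (non_nbrs E R v)) = 0" for v
      using non_nbrs_le[of v] unfolding h_def shrink_steps_def by simp
    moreover have "h (card R) = 0"
      using True unfolding h_def shrink_steps_def by simp
    ultimately show ?thesis using True r0 by simp
  next
    case False
    let ?L = "low_degree_vertices E D R"
    have L: "?L \<subseteq> R" "finite ?L" using finR by (auto simp: low_degree_vertices_def)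
    have "real (card ?L) * card R \<le> r0 * r0"
      using sparse by (simp add: power2_eq_square)
    also have "\<dots> \<le> r0 * card R"
      using False r0 by (intro mult_left_mono) auto
    finally have card_L: "real (card ?L) \<le> r0"
      using False r0 by (simp add: mult_le_cancel_right)
    have card_R_L: "real (card (R - ?L)) \<le> card V"
      using card_mono[OF V, of "R - ?L"] R by auto
    have "(\<Sum>v\<in>?L. P powr h (card (non_nbrs E R v))) \<le> (\<Sum>v\<in>?L. P powr h (card R))"
      using P shrink_steps_mono[OF _ g non_nbrs_le] r0 unfolding h_def
      by (intro sum_mono powr_mono) auto
    also have "\<dots> \<le> r0 * P powr h (card R)"
      using card_L by (simp add: mult_right_mono)
    finally have low: "(\<Sum>v\<in>?L. P powr h (card (non_nbrs E R v))) \<le> r0 * P powr h (card R)" .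
    have shrink: "h (card (non_nbrs E R v)) \<le> h (card R) - 1" if "v \<in> R - ?L" for v
      unfolding h_def using D False r0 card_non_nbrs_le[OF finR that]
      by (intro shrink_steps_mult_le) auto
    have "(\<Sum>v\<in>R - ?L. P powr h (card (non_nbrs E R v))) \<le> (\<Sum>v\<in>R - ?L. P powr (h (card R) - 1))"
      using P shrink by (intro sum_mono powr_mono) auto
    also have "\<dots> = card (R - ?L) * (P powr h (card R) / P)"
      using P by (simp add: powr_diff)
    also have "\<dots> \<le> card V * (P powr h (card R) / P)"
      using card_R_L P by (intro mult_right_mono) auto
    also have "\<dots> = r0 * P powr h (card R)"
      unfolding P_def using r0 by (simp add: field_simps)
    finally have high: "(\<Sum>v\<in>R - ?L. P powr h (card (non_nbrs E R v))) \<le> r0 * P powr h (card R)" .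
    show ?thesis
      using low high sum.subset_diff[OF L(1) finR, of "\<lambda>v. P powr h (card (non_nbrs E R v))"] by simp
  qed
qed

lemma card_indep_sets_le:
  fixes V :: "'a set" and r0 D :: real
  defines "P \<equiv> real (card V) / r0" and "h \<equiv> shrink_steps r0 (- ln (1 - D/2))"
  assumes V: "finite V" and D: "0 < D" "D < 2" and r0: "1 \<le> r0" "r0 \<le> card V"
    and sparse: "\<And>R. R \<subseteq> V \<Longrightarrow> real (card (low_degree_vertices E D R)) * card R \<le> r0\<^sup>2"
  shows "R \<subseteq> V \<Longrightarrow> fact j * real (card (indep_sets E R j)) \<le> (2 * r0) ^ j * P powr h (card R)"
proof (induction j arbitrary: R)
  case 0
  have "finite R" using 0 V finite_subset by blast
  then have "indep_sets E R 0 = {{}}"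
    unfolding indep_sets_def using rev_finite_subset by (fastforce simp: card_eq_0_iff)
  moreover have "0 \<le> h (card R)"
    unfolding h_def using D r0 by (intro shrink_steps_nonneg) auto
  ultimately show ?case
    unfolding P_def using r0 by (simp add: ge_one_powr_ge_zero)
next
  case (Suc j)
  have R: "finite R" using Suc.prems V finite_subset by blast
  have non_nbrs: "non_nbrs E R v \<subseteq> V" for v using Suc.prems by (auto simp: non_nbrs_def)
  have "fact (Suc j) * real (card (indep_sets E R (Suc j)))
      = fact j * (real (Suc j) * card (indep_sets E R (Suc j)))"
    by (simp add: algebra_simps)
  also have "\<dots> \<le> fact j * (\<Sum>v\<in>R. real (card (indep_sets E (non_nbrs E R v) j)))"
    by (intro mult_left_mono card_indep_sets_Suc_le[OF R]) simp
  also have "\<dots> = (\<Sum>v\<in>R. fact j * real (card (indep_sets E (non_nbrs E R v) j)))"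
    by (simp add: sum_distrib_left)
  also have "\<dots> \<le> (\<Sum>v\<in>R. (2 * r0) ^ j * P powr h (card (non_nbrs E R v)))"
    using Suc.IH[OF non_nbrs] by (intro sum_mono) auto
  also have "\<dots> \<le> (2 * r0) ^ j * (2 * r0 * P powr h (card R))"
    unfolding sum_distrib_left[symmetric] P_def h_def using r0
    by (intro mult_left_mono sum_powr_shrink_steps_non_nbrs_le[OF V D r0 sparse[OF Suc.prems] Suc.prems]) auto
  finally show ?case by (simp add: mult_ac)
qed

section \<open>A vertex subset containing few independent sets\<close>

lemma binomial_mult_power_le:
  assumes "m \<le> n"
  shows "real (m choose t) * real n ^ t \<le> real (n choose t) * real m ^ t"
proof (cases "t \<le> m")
  case False
  then show ?thesis by (simp add: binomial_eq_0)
next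
  case True
  have "real (m choose t) * real n ^ t = (\<Prod>i = 0..<t. real (m - i) / real (t - i)) * (\<Prod>i = 0..<t. real n)"
    using binomial_altdef_of_nat[OF True, where 'a=real] by simp
  also have "\<dots> = (\<Prod>i = 0..<t. real (m - i) / real (t - i) * real n)"
    by (rule prod.distrib[symmetric])
  also have "\<dots> \<le> (\<Prod>i = 0..<t. real (n - i) / real (t - i) * real m)"
  proof (intro prod_mono conjI)
    fix i assume i: "i \<in> {0..<t}"
    have "real (m - i) * real n \<le> real (n - i) * real m"
      using i True assms by (simp add: of_nat_diff algebra_simps mult_left_mono)
    then show "real (m - i) / real (t - i) * real n \<le> real (n - i) / real (t - i) * real m"
      using i by (simp add: divide_right_mono mult.commute[of "_ / _"] times_divide_eq_left)
  qed simp
  also have "\<dots> = (\<Prod>i = 0..<t. real (n - i) / real (t - i)) * (\<Prod>i = 0..<t. real m)"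
    by (rule prod.distrib)
  also have "\<dots> = real (n choose t) * real m ^ t"
    using True assms by (simp only: binomial_altdef_of_nat prod_constant card_atLeastLessThan diff_zero)
  finally show ?thesis .
qed

lemma exists_le_average:
  fixes f :: "'a \<Rightarrow> nat"
  assumes "finite S" "S \<noteq> {}"
  shows "\<exists>x\<in>S. f x * card S \<le> sum f S"
proof (rule ccontr)
  assume "\<not> ?thesis"
  then have "(\<Sum>x\<in>S. sum f S) < (\<Sum>x\<in>S. f x * card S)"
    using assms by (intro sum_strict_mono) (auto simp: not_le)
  also have "\<dots> = sum f S * card S"
    by (rule sum_distrib_right[symmetric])
  finally show False by (simp add: mult.commute)
qed

lemma card_supersets:
  assumes V: "finite V" and I: "I \<subseteq> V" "card I \<le> m"
  shows "card {X. X \<subseteq> V \<and> card X = m \<and> I \<subseteq> X} = (card V - card I) choose (m - card I)"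
proof -
  let ?T = "{Y. Y \<subseteq> V - I \<and> card Y = m - card I}"
  have fin: "finite I" "finite (V - I)" using I V finite_subset by auto
  have "bij_betw (\<lambda>Y. Y \<union> I) ?T {X. X \<subseteq> V \<and> card X = m \<and> I \<subseteq> X}"
  proof (rule bij_betw_byWitness[where f' = "\<lambda>X. X - I"])
    show "(\<lambda>Y. Y \<union> I) ` ?T \<subseteq> {X. X \<subseteq> V \<and> card X = m \<and> I \<subseteq> X}"
    proof clarify
      fix Y assume Y: "Y \<subseteq> V - I" "card Y = m - card I"
      have "card (Y \<union> I) = card Y + card I"
        using Y fin finite_subset by (intro card_Un_disjoint) auto
      then show "Y \<union> I \<subseteq> V \<and> card (Y \<union> I) = m \<and> I \<subseteq> Y \<union> I"
        using Y I by auto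
    qed
    show "(\<lambda>X. X - I) ` {X. X \<subseteq> V \<and> card X = m \<and> I \<subseteq> X} \<subseteq> ?T"
      using fin by (auto simp: card_Diff_subset)
  qed auto
  then have "card {X. X \<subseteq> V \<and> card X = m \<and> I \<subseteq> X} = card ?T"
    by (simp add: bij_betw_same_card)
  also have "\<dots> = card (V - I) choose (m - card I)"
    using fin by (intro n_subsets)
  finally show ?thesis using I fin by (simp add: card_Diff_subset)
qed

lemma exists_subset_few_members:
  fixes V :: "'a set" and F :: "'a set set"
  assumes V: "finite V" and F: "\<And>I. I \<in> F \<Longrightarrow> I \<subseteq> V \<and> card I = t" and m: "m \<le> card V"
  shows "\<exists>X. X \<subseteq> V \<and> card X = m \<and> card {I \<in> F. I \<subseteq> X} * (card V choose t) \<le> card F * (m choose t)"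
proof -
  let ?n = "card V" and ?S = "{X. X \<subseteq> V \<and> card X = m}"
  let ?cnt = "\<lambda>X. card {I \<in> F. I \<subseteq> X}"
  have finS: "finite ?S" using V by simp
  have cardS: "card ?S = ?n choose m" using V by (rule n_subsets)
  then have "?S \<noteq> {}" using m by (metis binomial_eq_0_iff card.empty not_le)
  show ?thesis
  proof (cases "t \<le> m")
    case False
    obtain X where X: "X \<in> ?S" using \<open>?S \<noteq> {}\<close> by blast
    have "\<not> I \<subseteq> X" if "I \<in> F" for I
    proof
      assume "I \<subseteq> X"
      then have "card I \<le> card X" using X V finite_subset by (intro card_mono) auto
      then show False using F[OF that] X False by simp
    qed
    then have none: "{I \<in> F. I \<subseteq> X} = {}" by auto
    have "card {I \<in> F. I \<subseteq> X} * (card V choose t) \<le> card F * (m choose t)"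
      unfolding none by simp
    then show ?thesis using X by blast
  next
    case True
    have finF: "finite F" by (rule finite_subset[of _ "Pow V"]) (use F V in auto)
    have "(\<Sum>X\<in>?S. ?cnt X) = (\<Sum>I\<in>F. card {X \<in> ?S. I \<subseteq> X})"
      using sum.inter_filter[OF finF, of "\<lambda>_. 1::nat"] sum.inter_filter[OF finS, of "\<lambda>_. 1::nat"]
      by (simp add: sum.swap[of _ ?S F])
    also have "\<dots> = card F * ((?n - t) choose (m - t))"
      using card_supersets[OF V] F True
      by (simp add: conj_commute conj_left_commute)
    finally have total: "(\<Sum>X\<in>?S. ?cnt X) = card F * ((?n - t) choose (m - t))" .
    obtain X where X: "X \<in> ?S" and avg: "?cnt X * card ?S \<le> (\<Sum>X\<in>?S. ?cnt X)"
      using exists_le_average[OF finS \<open>?S \<noteq> {}\<close>, of ?cnt] by blast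
    have "?cnt X * (?n choose t) * ((?n - t) choose (m - t)) = ?cnt X * card ?S * (m choose t)"
      unfolding cardS by (simp only: mult.assoc choose_mult[OF True m])
    also have "\<dots> \<le> card F * ((?n - t) choose (m - t)) * (m choose t)"
      using avg total by (intro mult_right_mono) auto
    finally have "?cnt X * (?n choose t) * ((?n - t) choose (m - t))
        \<le> card F * (m choose t) * ((?n - t) choose (m - t))"
      by (simp only: ac_simps)
    then have "?cnt X * (?n choose t) \<le> card F * (m choose t)"
      using m True by (simp only: mult_le_cancel2) simp
    then show ?thesis using X by auto
  qed
qed

lemma power_div_fact_le_exp:
  fixes x :: real
  assumes "0 \<le> x"
  shows "x ^ n / fact n \<le> exp x"
  using sum_le_suminf[OF summable_exp_generic[of x], of "{n}"] assms
  by (simp add: exp_def scaleR_conv_of_real divide_inverse mult.commute)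

lemma power_div_exp_le_fact: "(real t / exp 1) ^ t \<le> fact t"
proof -
  have "real t ^ t / fact t \<le> exp 1 ^ t"
    using power_div_fact_le_exp[of "real t" t] by (simp add: exp_of_nat_mult[symmetric])
  then show ?thesis by (simp add: power_divide field_simps)
qed

section \<open>Ramsey numbers\<close>

lemma ex_clique_or_indep_bound: "\<exists>N. \<forall>E. simple_graph N E \<longrightarrow> has_clique N E s \<or> has_indep N E t"
proof -
  obtain N where N: "\<forall>(V::nat set) (E::nat set set). finite V \<and> N \<le> card V \<longrightarrow>
      (\<exists>R \<subseteq> V. card R = s \<and> clique R E \<or> card R = t \<and> indep R E)"
    using ramsey2[where 'a=nat, of s t] by blast
  have "has_clique N E s \<or> has_indep N E t" if sg: "simple_graph N E" for E
  proof -
    let ?E = "{{u, v} | u v. E u v}"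
    obtain R where R: "R \<subseteq> {0..<N}" "card R = s \<and> clique R ?E \<or> card R = t \<and> indep R ?E"
      using N[rule_format, of "{0..<N}" ?E] by auto
    from R(2) show ?thesis
    proof
      assume R_clique: "card R = s \<and> clique R ?E"
      have "E x y" if xy: "x \<in> R" "y \<in> R" "x \<noteq> y" for x y
      proof -
        have "{x, y} \<in> ?E" using R_clique xy unfolding clique_def by auto
        then obtain u v where uv: "{x, y} = {u, v}" "E u v" by blast
        have "x < N" "y < N" using xy R(1) by auto
        then have "E y x \<Longrightarrow> E x y" using sg unfolding simple_graph_def by blast
        then show ?thesis using uv by (auto simp: doubleton_eq_iff)
      qed
      then show ?thesis unfolding has_clique_def using R_clique R(1) by blast
    next
      assume R_indep: "card R = t \<and> indep R ?E"
      have "\<not> E x y" if "x \<in> R" "y \<in> R" "x \<noteq> y" for x y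
      proof
        assume "E x y"
        then have "{x, y} \<in> ?E" by blast
        then show False using R_indep that unfolding indep_def by auto
      qed
      then show ?thesis unfolding has_indep_def using R_indep R(1) by blast
    qed
  qed
  then show ?thesis by blast
qed

lemma has_clique_mono:
  assumes "M \<le> N" "has_clique M E s"
  shows "has_clique N E s"
proof -
  obtain S where "S \<subseteq> {0..<M}" "card S = s" "\<forall>x\<in>S. \<forall>y\<in>S. x \<noteq> y \<longrightarrow> E x y"
    using assms(2) unfolding has_clique_def by blast
  then show ?thesis unfolding has_clique_def using assms(1) by (intro exI[of _ S]) auto
qed

lemma has_indep_mono:
  assumes "M \<le> N" "has_indep M E t"
  shows "has_indep N E t"
proof -
  obtain S where "S \<subseteq> {0..<M}" "card S = t" "\<forall>x\<in>S. \<forall>y\<in>S. x \<noteq> y \<longrightarrow> \<not> E x y"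
    using assms(2) unfolding has_indep_def by blast
  then show ?thesis unfolding has_indep_def using assms(1) by (intro exI[of _ S]) auto
qed

lemma clique_or_indep_if_ramsey_le:
  assumes N: "ramsey s t \<le> N" and sg: "simple_graph N E"
  shows "has_clique N E s \<or> has_indep N E t"
proof -
  let ?M = "ramsey s t"
  have "\<forall>E. simple_graph ?M E \<longrightarrow> has_clique ?M E s \<or> has_indep ?M E t"
    unfolding ramsey_def using ex_clique_or_indep_bound by (rule LeastI_ex)
  moreover have "simple_graph ?M E"
    using sg N unfolding simple_graph_def by auto
  ultimately show ?thesis
    using has_clique_mono[OF N] has_indep_mono[OF N] by blast
qed

lemma card_less_ramsey:
  assumes sg: "simple_graph n E" and nc: "\<not> has_clique n E s" and Y: "Y \<subseteq> {..<n}"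
    and no_indep: "indep_sets E Y t = {}"
  shows "card Y < ramsey s t"
proof (rule ccontr)
  let ?k = "card Y"
  assume "\<not> ?k < ramsey s t"
  obtain h where "bij_betw h {0..<?k} Y"
    using ex_bij_betw_nat_finite[OF finite_subset[OF Y finite_lessThan]] by blast
  then have inj: "inj_on h {0..<?k}" and h_in: "\<And>i. i < ?k \<Longrightarrow> h i \<in> Y"
    by (auto simp: bij_betw_def)
  have h_less: "h i < n" if "i < ?k" for i
    using h_in[OF that] Y by auto
  have card_h: "card (h ` S) = card S" if "S \<subseteq> {0..<?k}" for S
    using inj_on_subset[OF inj that] by (rule card_image)
  define E' where "E' = (\<lambda>i j. E (h i) (h j))"
  have "simple_graph ?k E'"
    using sg h_less unfolding simple_graph_def E'_def by blast
  then have "has_clique ?k E' s \<or> has_indep ?k E' t"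
    using \<open>\<not> ?k < ramsey s t\<close> by (intro clique_or_indep_if_ramsey_le) auto
  then show False
  proof
    assume "has_clique ?k E' s"
    then obtain S where S: "S \<subseteq> {0..<?k}" "card S = s" "\<forall>x\<in>S. \<forall>y\<in>S. x \<noteq> y \<longrightarrow> E' x y"
      unfolding has_clique_def by blast
    have "h ` S \<subseteq> {0..<n}" using S(1) h_less by auto
    moreover have "\<forall>x\<in>h ` S. \<forall>y\<in>h ` S. x \<noteq> y \<longrightarrow> E x y" using S(3) unfolding E'_def by auto
    ultimately show False using nc card_h[OF S(1)] S(2) unfolding has_clique_def by blast
  next
    assume "has_indep ?k E' t"
    then obtain S where S: "S \<subseteq> {0..<?k}" "card S = t" "\<forall>x\<in>S. \<forall>y\<in>S. x \<noteq> y \<longrightarrow> \<not> E' x y"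
      unfolding has_indep_def by blast
    have "h ` S \<subseteq> Y" using S(1) h_in by auto
    moreover have "\<forall>x\<in>h ` S. \<forall>y\<in>h ` S. x \<noteq> y \<longrightarrow> \<not> E x y" using S(3) unfolding E'_def by auto
    ultimately have "h ` S \<in> indep_sets E Y t"
      using card_h[OF S(1)] S(2) unfolding indep_sets_def by blast
    then show False using no_indep by simp
  qed
qed

text \<open>Deleting one vertex from each independent \<open>t\<close>-set of \<open>X\<close> leaves a set without any.\<close>

lemma card_diff_indep_sets_less_ramsey:
  assumes sg: "simple_graph n E" and nc: "\<not> has_clique n E s" and X: "X \<subseteq> {..<n}" and t: "1 \<le> t"
  shows "card X - card (indep_sets E X t) < ramsey s t"
proof -
  let ?F = "indep_sets E X t"
  have finF: "finite ?F" using X by (intro finite_indep_sets) (rule finite_subset, auto)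
  define T where "T = (\<lambda>I. SOME v. v \<in> I) ` ?F"
  have "card X - card ?F \<le> card X - card T"
    unfolding T_def using card_image_le[OF finF] by (intro diff_le_mono2)
  also have "\<dots> \<le> card (X - T)"
    by (rule diff_card_le_card_Diff) (simp add: T_def finF)
  also have "card (X - T) < ramsey s t"
  proof (rule card_less_ramsey[OF sg nc])
    show "X - T \<subseteq> {..<n}" using X by auto
    show "indep_sets E (X - T) t = {}"
    proof (rule ccontr)
      assume "indep_sets E (X - T) t \<noteq> {}"
      then obtain I where I: "I \<in> indep_sets E (X - T) t" by blast
      then have "I \<in> ?F" "I \<noteq> {}" using t by (auto simp: indep_sets_def)
      then have "(SOME v. v \<in> I) \<in> I \<inter> T" unfolding T_def by (auto simp: some_in_eq)
      then show False using I by (auto simp: indep_sets_def)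
    qed
  qed
  finally show ?thesis .
qed

section \<open>A lower bound on \<open>r(s,t)\<close> from a single \<open>K\<^sub>s\<close>-free \<open>(n,d,\<lambda>)\<close>-graph\<close>

lemma regular_degree_le:
  assumes "regular n E d" "0 < n"
  shows "d \<le> n"
proof -
  have "d = card {u. u < n \<and> E 0 u}" using assms unfolding regular_def by auto
  also have "\<dots> \<le> card {..<n}" by (intro card_mono) auto
  finally show ?thesis by simp
qed

lemma low_degree_vertices_bound:
  assumes G: "ndl_graph n d lam E" and n: "2 \<le> n" and d: "0 < d" and R: "R \<subseteq> {..<n}"
  shows "real (card (low_degree_vertices E (d / n) R)) * card R \<le> (2 * lam * n / d)\<^sup>2"
proof -
  define D where "D = real d / real n"
  let ?L = "low_degree_vertices E D R"
  define z where "z = sqrt (card ?L * card R)"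
  have D: "0 < D" unfolding D_def using d n by simp
  have lam: "0 \<le> lam" using G unfolding ndl_graph_def by auto
  have z: "0 \<le> z" "z\<^sup>2 = card ?L * card R" unfolding z_def by simp_all
  have "edge_count E ?L R \<le> (\<Sum>v\<in>?L. D * card R / 2)"
    unfolding edge_count_def by (intro sum_mono) (auto simp: low_degree_vertices_def)
  moreover have "D * card ?L * card R - lam * z \<le> edge_count E ?L R"
  proof -
    have "?L \<subseteq> {..<n}" using R by (auto simp: low_degree_vertices_def)
    from expander_mixing[OF G n this R] show ?thesis
      unfolding D_def z_def by (simp add: abs_le_iff)
  qed
  ultimately have "D * z\<^sup>2 / 2 \<le> lam * z"
    unfolding z(2) by (simp add: algebra_simps)
  then have "z \<le> 2 * lam / D"
    using D lam z(1) by (cases "z = 0") (auto simp: power2_eq_square field_simps)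
  then have "z\<^sup>2 \<le> (2 * lam / D)\<^sup>2"
    using z(1) by (intro power_mono)
  then show ?thesis
    using z(2) n unfolding D_def by (simp add: field_simps)
qed

lemma card_indep_sets_graph_le:
  assumes G: "ndl_graph n d lam E" and n: "2 \<le> n" and d: "0 < d"
    and r0: "1 \<le> r0" "r0 \<le> real n" "2 * lam * n / d \<le> r0"
  shows "fact t * real (card (indep_sets E {..<n} t)) \<le> (2 * r0) ^ t * real n powr (1 + 2 * ln n * n / d)"
proof -
  define D where "D = real d / real n"
  define g where "g = - ln (1 - D/2)"
  have "d \<le> n" using regular_degree_le n G unfolding ndl_graph_def by auto
  then have D: "0 < D" "D \<le> 1" unfolding D_def using d n by auto
  have "ln (1 - D/2) \<le> (1 - D/2) - 1" using D by (intro ln_le_minus_one) auto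
  then have gD: "D / 2 \<le> g" unfolding g_def by simp
  have "0 \<le> lam" using G unfolding ndl_graph_def by auto
  then have "(2 * lam * n / d)\<^sup>2 \<le> r0\<^sup>2" using r0 by (intro power_mono) auto
  then have sparse: "real (card (low_degree_vertices E D R)) * card R \<le> r0\<^sup>2" if "R \<subseteq> {..<n}" for R
    using low_degree_vertices_bound[OF G n d that] unfolding D_def by linarith
  have "fact t * real (card (indep_sets E {..<n} t))
      \<le> (2 * r0) ^ t * (card {..<n} / r0) powr shrink_steps r0 g (card {..<n})"
    unfolding g_def by (rule card_indep_sets_le) (use D r0 sparse in auto)
  also have "\<dots> = (2 * r0) ^ t * (n / r0) powr shrink_steps r0 g n"
    by simp
  also have "(n / r0) powr shrink_steps r0 g n \<le> n powr shrink_steps r0 g n"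
    using r0 D gD by (intro powr_mono2 shrink_steps_nonneg) (auto simp: field_simps)
  also have "\<dots> \<le> n powr (1 + 2 * ln n * n / d)"
  proof (intro powr_mono)
    have "ln (n / r0) / g \<le> ln n / (D / 2)"
      using r0 D gD by (intro frac_le) (auto simp: ln_div)
    then show "shrink_steps r0 g n \<le> 1 + 2 * ln n * n / d"
      unfolding shrink_steps_def D_def using d n by (simp add: field_simps)
  qed (use n in auto)
  finally show ?thesis using r0 by (simp add: mult_left_mono)
qed

lemma expected_indep_sets_le_one:
  fixes m t :: nat and n r0 H :: real
  assumes n: "1 \<le> n" and r0: "0 \<le> r0" and H: "H * ln n \<le> real t / 2"
    and m: "4 * exp 1 * r0 * m \<le> n * real t"
  shows "(2 * r0 * m / n) ^ t * n powr H / fact t \<le> 1"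
proof -
  have "2 * r0 * m / n \<le> t / (2 * exp 1)"
    using m n by (simp add: field_simps)
  then have "(2 * r0 * m / n) ^ t \<le> (t / (2 * exp 1)) ^ t"
    using r0 n by (intro power_mono) auto
  also have "\<dots> = (t / exp 1) ^ t / 2 ^ t"
    by (simp add: power_divide power_mult_distrib)
  also have "\<dots> \<le> fact t / 2 ^ t"
    using power_div_exp_le_fact[of t] by (intro divide_right_mono) auto
  finally have power: "(2 * r0 * m / n) ^ t \<le> fact t / 2 ^ t" .
  have "n powr H = exp (H * ln n)" using n by (simp add: powr_def)
  also have "\<dots> \<le> exp (t * ln 2)"
  proof -
    have "real t / 2 \<le> t * ln 2"
      using mult_left_mono[of "1/2" "ln 2" "real t"] ln2_ge_two_thirds by simp
    then show ?thesis using H by simp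
  qed
  also have "\<dots> = 2 ^ t" by (simp add: exp_of_nat_mult)
  finally have "(2 * r0 * m / n) ^ t * n powr H \<le> fact t / 2 ^ t * 2 ^ t"
    using power r0 n by (intro mult_mono) auto
  then show ?thesis by simp
qed

lemma exists_subset_few_indep_sets:
  assumes G: "ndl_graph n d lam E" and n: "2 \<le> n" and d: "0 < d"
    and r0: "1 \<le> r0" "r0 \<le> real n" "2 * lam * n / d \<le> r0"
    and t: "(1 + 2 * ln n * n / d) * ln n \<le> real t / 2"
    and m: "m \<le> n" "4 * exp 1 * r0 * m \<le> n * real t"
  shows "\<exists>X. X \<subseteq> {..<n} \<and> card X = m \<and> card (indep_sets E X t) \<le> 1"
proof -
  let ?F = "indep_sets E {..<n} t"
  obtain X where X: "X \<subseteq> {..<n}" "card X = m"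
    and few: "card {I \<in> ?F. I \<subseteq> X} * (n choose t) \<le> card ?F * (m choose t)"
    using exists_subset_few_members[of "{..<n}" ?F t m] m(1) by (auto simp: indep_sets_def)
  have indep_X: "indep_sets E X t = {I \<in> ?F. I \<subseteq> X}"
    using X(1) by (auto simp: indep_sets_def)
  have "real (card (indep_sets E X t)) \<le> 1"
  proof (cases "t \<le> n")
    case False
    have "card I \<le> n" if "I \<subseteq> X" for I
      using card_mono[OF finite_lessThan[of n], of I] X(1) that by auto
    then have "indep_sets E X t = {}"
      using False by (force simp: indep_sets_def)
    then show ?thesis by simp
  next
    case True
    have "real (card (indep_sets E X t)) * real (n choose t) \<le> real (card ?F) * real (m choose t)"
      using of_nat_mono[OF few] unfolding indep_X by simp
    then have "real (card (indep_sets E X t)) * real (n choose t) * real n ^ t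
        \<le> real (card ?F) * (real (m choose t) * real n ^ t)"
      unfolding mult.assoc[symmetric] by (rule mult_right_mono) simp
    also have "\<dots> \<le> card ?F * ((n choose t) * real m ^ t)"
      using binomial_mult_power_le[OF m(1)] by (intro mult_left_mono) auto
    finally have "real (card (indep_sets E X t)) * n ^ t \<le> card ?F * m ^ t"
      using True by (simp add: mult_ac)
    then have "real (card (indep_sets E X t)) \<le> card ?F * (m / n) ^ t"
      using n by (simp add: power_divide field_simps)
    also have "\<dots> \<le> (2 * r0) ^ t * n powr (1 + 2 * ln n * n / d) / fact t * (m / n) ^ t"
      using card_indep_sets_graph_le[OF G n d r0, of t] by (intro mult_right_mono) (auto simp: field_simps)
    also have "\<dots> = (2 * r0 * m / n) ^ t * n powr (1 + 2 * ln n * n / d) / fact t"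
      by (simp add: power_mult_distrib power_divide mult_ac)
    also have "\<dots> \<le> 1"
      using r0 n t m by (intro expected_indep_sets_le_one) auto
    finally show ?thesis .
  qed
  then show ?thesis using X by auto
qed

lemma ramsey_gt_of_graph:
  assumes G: "ndl_graph n d lam E" and nc: "\<not> has_clique n E s" and n: "2 \<le> n" and d: "0 < d"
    and r0: "1 \<le> r0" "r0 \<le> real n" "2 * lam * n / d \<le> r0"
    and t: "1 \<le> t" "(1 + 2 * ln n * n / d) * ln n \<le> real t / 2" "t \<le> r0"
  shows "real n * t / (4 * exp 1 * r0) - 1 < ramsey s t"
proof -
  define m where "m = nat \<lfloor>real n * t / (4 * exp 1 * r0)\<rfloor>"
  have "0 \<le> real n * t / (4 * exp 1 * r0)" using r0 by simp
  then have m: "real m \<le> real n * t / (4 * exp 1 * r0)" "real n * t / (4 * exp 1 * r0) - 1 < m"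
    unfolding m_def by linarith+
  have "1 * r0 \<le> 4 * exp 1 * r0"
    using exp_ge_add_one_self[of "1::real"] r0 by (intro mult_right_mono) auto
  then have "real t \<le> 4 * exp 1 * r0" using t(3) by simp
  then have "real n * t / (4 * exp 1 * r0) \<le> n"
    using r0 exp_gt_one[of 1] by (simp add: pos_divide_le_eq mult_left_mono)
  then have "m \<le> n" using m(1) by linarith
  moreover have "4 * exp 1 * r0 * m \<le> n * real t"
    using m(1) r0 by (simp add: field_simps)
  ultimately obtain X where X: "X \<subseteq> {..<n}" "card X = m" "card (indep_sets E X t) \<le> 1"
    using exists_subset_few_indep_sets[OF G n d r0 t(2)] by blast
  have "m - card (indep_sets E X t) < ramsey s t"
    using card_diff_indep_sets_less_ramsey[OF _ nc X(1) t(1)] G X(2) unfolding ndl_graph_def by auto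
  then have "m \<le> ramsey s t" using X(3) by linarith
  then show ?thesis using m(2) by linarith
qed

section \<open>Asymptotics\<close>

lemma powr_nat_floor_ge_half:
  fixes X p :: real
  assumes X: "1 \<le> X" and p: "0 \<le> p" "p \<le> 1"
  shows "X powr p / 2 \<le> real (nat \<lfloor>X\<rfloor>) powr p"
proof -
  have "X - 1 < \<lfloor>X\<rfloor>" "1 \<le> \<lfloor>X\<rfloor>" using X by linarith+
  then have "X / 2 \<le> real (nat \<lfloor>X\<rfloor>)" by linarith
  then have "(X / 2) powr p \<le> real (nat \<lfloor>X\<rfloor>) powr p"
    using X p by (intro powr_mono2) auto
  moreover have "2 powr p \<le> 2 powr 1" using p by (intro powr_mono) auto
  then have "X powr p / 2 \<le> X powr p / 2 powr p"
    using X by (intro divide_left_mono) auto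
  moreover have "X powr p / 2 powr p = (X / 2) powr p"
    using X by (simp add: powr_divide)
  ultimately show ?thesis by linarith
qed

lemma spectral_ratio_le:
  fixes n d lam C c \<gamma> :: real
  assumes c: "0 < c" and n: "0 < n" and C: "0 \<le> C"
    and d: "c * n powr (1 - \<gamma>) \<le> d" and lam: "lam \<le> C * sqrt d"
  shows "2 * lam * n / d \<le> 2 * C / sqrt c * n powr ((1 + \<gamma>) / 2)"
proof -
  have "0 < c * n powr (1 - \<gamma>)" using c n by simp
  then have dpos: "0 < d" using d by linarith
  have "2 * lam * n / d \<le> 2 * (C * sqrt d) * n / d"
    using lam n dpos by (intro divide_right_mono mult_right_mono mult_left_mono) auto
  also have "\<dots> = 2 * C * n / sqrt d"
    using dpos by (simp add: field_simps)
  also have "\<dots> \<le> 2 * C * n / sqrt (c * n powr (1 - \<gamma>))"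
    using d C n c dpos by (intro divide_left_mono real_sqrt_le_mono mult_pos_pos) auto
  also have "sqrt (c * n powr (1 - \<gamma>)) = sqrt c * n powr ((1 - \<gamma>) / 2)"
    using n by (simp add: real_sqrt_mult powr_half_sqrt_powr)
  also have "2 * C * n / (sqrt c * n powr ((1 - \<gamma>) / 2)) = 2 * C / sqrt c * (n powr 1 / n powr ((1 - \<gamma>) / 2))"
    using n by simp
  also have "n powr 1 / n powr ((1 - \<gamma>) / 2) = n powr ((1 + \<gamma>) / 2)"
    by (subst powr_diff[symmetric]) (simp add: field_simps)
  finally show ?thesis .
qed

lemma log_degree_bound:
  fixes a c eps u d :: real and n t :: nat
  assumes a: "1 \<le> a" and c: "0 < c" and eps: "eps \<le> c / (8 * a\<^sup>2)"
    and u: "u = eps * t / (ln t)\<^sup>2" "1 \<le> u" "u \<le> t" and t: "1 \<le> ln t" "a * ln t \<le> t / 4"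
    and n: "1 \<le> n" "n \<le> u powr a" and d: "c * n powr (1 - 1 / a) \<le> d"
  shows "(1 + 2 * ln n * n / d) * ln n \<le> real t / 2"
proof -
  have lower_pos: "0 < c * n powr (1 - 1 / a)" using c n by simp
  then have dpos: "0 < d" using d by linarith
  have ln_n: "0 \<le> ln n" "ln n \<le> a * ln t"
  proof -
    show "0 \<le> ln n" using n by simp
    have "ln n \<le> ln (u powr a)" using n u(2) by (subst ln_le_cancel_iff) auto
    also have "\<dots> = a * ln u" using u by (simp add: ln_powr)
    also have "\<dots> \<le> a * ln t" using u a by (intro mult_left_mono) auto
    finally show "ln n \<le> a * ln t" .
  qed
  have "n / d \<le> n / (c * n powr (1 - 1 / a))"
    using d lower_pos dpos by (intro divide_left_mono) auto
  also have "\<dots> = (n powr 1 / n powr (1 - 1 / a)) / c"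
    using n by simp
  also have "n powr 1 / n powr (1 - 1 / a) = n powr (1 / a)"
    by (subst powr_diff[symmetric]) simp
  also have "n powr (1 / a) \<le> (u powr a) powr (1 / a)"
    using n a by (intro powr_mono2) auto
  also have "(u powr a) powr (1 / a) = u"
    using u(2) a by (simp add: powr_powr)
  finally have n_d: "n / d \<le> u / c" using c by (simp add: divide_right_mono)
  have "(1 + 2 * ln n * n / d) * ln n = ln n + 2 * (ln n)\<^sup>2 * (n / d)"
    by (simp add: algebra_simps power2_eq_square)
  also have "\<dots> \<le> a * ln t + 2 * (a * ln t)\<^sup>2 * (u / c)"
    using ln_n n_d dpos by (intro add_mono mult_mono mult_left_mono power_mono) auto
  also have "2 * (a * ln t)\<^sup>2 * (u / c) = 2 * a\<^sup>2 * eps * t / c"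
    unfolding u(1) using t c by (simp add: power_mult_distrib field_simps)
  also have "\<dots> \<le> 2 * a\<^sup>2 * (c / (8 * a\<^sup>2)) * t / c"
    using eps c by (intro divide_right_mono mult_right_mono mult_left_mono) auto
  also have "\<dots> = t / 4" using a c by (simp add: field_simps)
  finally show ?thesis using t by simp
qed

lemma ramsey_lower_bound_from_graph:
  fixes a \<beta> eps K u c C lam :: real and n d t :: nat
  assumes G: "ndl_graph n d lam E" "\<not> has_clique n E s" "lam \<le> C * sqrt d"
      "c * n powr (1 - 1 / a) \<le> d"
    and c: "0 < c" "0 \<le> C" and a: "3 \<le> a" and \<beta>: "\<beta> = (a + 1) / (2 * a)"
    and eps: "eps \<le> 1" "eps \<le> c / (8 * a\<^sup>2)" and K: "1 \<le> K" "2 * C / sqrt c \<le> K"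
    and u: "u = eps * t / (ln t)\<^sup>2" "1 \<le> u" and t: "exp 1 \<le> t" "2 * real t \<le> u\<^sup>2" "a * ln t \<le> t / 4"
    and n: "2 \<le> n" "n \<le> u powr a" "K powr (1 / (1 - \<beta>)) \<le> n" "u powr (a * \<beta>) / 2 \<le> n powr \<beta>"
  shows "t * n powr (1 - \<beta>) / (4 * exp 1 * K) - 1 \<le> ramsey s t"
proof -
  define r0 where "r0 = K * n powr \<beta>"
  have \<beta>01: "0 < \<beta>" "\<beta> < 1" unfolding \<beta> using a by (auto simp: field_simps)
  have t_pos: "1 \<le> real t" using t(1) exp_gt_one[of 1] by linarith
  have t1: "1 \<le> ln t" using ln_ge_iff[of t 1] t(1) t_pos by simp
  have u_le: "u \<le> t"
  proof -
    have "eps * t \<le> 1 * real t" using eps(1) t_pos by (intro mult_right_mono) auto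
    also have "\<dots> \<le> t * (ln t)\<^sup>2" using t1 t_pos by (simp add: one_le_power)
    finally show ?thesis unfolding u(1) using t1 by (simp add: pos_divide_le_eq)
  qed
  have "0 < c * n powr (1 - 1 / a)" using c n by simp
  then have d: "0 < d" using G(4) by linarith
  have n_\<beta>: "1 \<le> n powr \<beta>" using n \<beta>01 by (intro ge_one_powr_ge_zero) auto
  then have r0: "1 \<le> r0" unfolding r0_def using mult_mono[OF K(1) n_\<beta>] K by simp
  have "K = (K powr (1 / (1 - \<beta>))) powr (1 - \<beta>)"
    using K \<beta>01 by (simp add: powr_powr)
  also have "\<dots> \<le> n powr (1 - \<beta>)"
    using n(3) \<beta>01 by (intro powr_mono2) auto
  finally have "r0 \<le> n powr (1 - \<beta>) * n powr \<beta>"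
    unfolding r0_def by (intro mult_right_mono) auto
  also have "\<dots> = n" using n by (simp add: powr_add[symmetric])
  finally have r0_n: "r0 \<le> n" .
  have "2 * lam * n / d \<le> 2 * C / sqrt c * n powr ((1 + 1 / a) / 2)"
    using spectral_ratio_le[OF c(1) _ c(2) G(4,3)] n by simp
  also have "(1 + 1 / a) / 2 = \<beta>" unfolding \<beta> using a by (simp add: field_simps)
  also have "2 * C / sqrt c * n powr \<beta> \<le> r0"
    unfolding r0_def using K(2) by (intro mult_right_mono) auto
  finally have spectral: "2 * lam * n / d \<le> r0" .
  have "real t \<le> u powr 2 / 2" using t(2) u(2) by simp
  also have "u powr 2 \<le> u powr (a * \<beta>)"
    using u(2) a unfolding \<beta> by (intro powr_mono) (auto simp: field_simps)
  also have "u powr (a * \<beta>) / 2 \<le> 1 * n powr \<beta>" using n(4) by simp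
  also have "\<dots> \<le> r0" unfolding r0_def using K(1) by (intro mult_right_mono) auto
  finally have t_r0: "t \<le> r0" by simp
  have "real n * t / (4 * exp 1 * r0) - 1 < ramsey s t"
    using ramsey_gt_of_graph[OF G(1,2) n(1) d r0 r0_n spectral _ _ t_r0] t_pos
      log_degree_bound[OF _ c(1) eps(2) u(1,2) u_le t1 t(3) _ n(2) G(4)] a n
    by simp
  moreover have "real n * t / (4 * exp 1 * r0) = t * n powr (1 - \<beta>) / (4 * exp 1 * K)"
    unfolding r0_def using n K by (simp add: powr_diff field_simps)
  ultimately show ?thesis by linarith
qed

lemma ramsey_lower_bound_at:
  fixes s N0 t :: nat and C c eps K :: real
  defines "a \<equiv> 2 * real s - 3" and "(u::real) \<equiv> eps * real t / (ln t)\<^sup>2"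
  assumes s: "3 \<le> s" and c: "0 < c" "0 \<le> C"
    and graphs: "\<forall>n\<ge>N0. \<exists>d lam E. ndl_graph n d lam E \<and> \<not> has_clique n E s \<and>
            lam \<le> C * sqrt (real d) \<and> real d \<ge> c * real n powr (1 - 1 / a)"
    and eps: "eps \<le> 1" "eps \<le> c / (8 * a\<^sup>2)" and K: "1 \<le> K" "2 * C / sqrt c \<le> K"
    and t: "exp 1 \<le> t" "N0 + 3 + K powr (2 * a / (a - 1)) \<le> u" "2 * real t \<le> u\<^sup>2" "a * ln t \<le> t / 4"
      "2 \<le> eps ^ (s - 2) / (8 * exp 1 * K) * (real t ^ (s - 1) / ln t ^ (2 * s - 4))"
  shows "eps ^ (s - 2) / (8 * exp 1 * K) / 2 * (real t ^ (s - 1) / ln t ^ (2 * s - 4)) \<le> ramsey s t"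
proof -
  define \<beta> where "\<beta> = (a + 1) / (2 * a)"
  define n where "n = nat \<lfloor>u powr a\<rfloor>"
  have a: "3 \<le> a" using s unfolding a_def by simp
  have \<beta>: "0 \<le> \<beta>" "\<beta> \<le> 1" "a * \<beta> = real (s - 1)" "a * (1 - \<beta>) = real (s - 2)"
      "1 / (1 - \<beta>) = 2 * a / (a - 1)"
    unfolding \<beta>_def a_def using s by (auto simp: field_simps of_nat_diff)
  have K_powr: "0 \<le> K powr (2 * a / (a - 1))" by simp
  then have u: "1 \<le> u" "real N0 + 2 + K powr (2 * a / (a - 1)) \<le> u - 1" using t(2) by linarith+
  have "u \<le> u powr a" using powr_mono[of 1 a u] u a by simp
  moreover have "0 \<le> u powr a" by simp
  ultimately have "u - 1 < n" "n \<le> u powr a" unfolding n_def by linarith+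
  then have "real N0 \<le> n" "2 \<le> real n" "K powr (1 / (1 - \<beta>)) \<le> n" "n \<le> u powr a"
    using u K_powr unfolding \<beta>(5) by linarith+
  then have n: "N0 \<le> n" "2 \<le> n" "K powr (1 / (1 - \<beta>)) \<le> n" "n \<le> u powr a"
    by simp_all
  obtain d lam E where G: "ndl_graph n d lam E" "\<not> has_clique n E s" "lam \<le> C * sqrt d"
      "c * n powr (1 - 1 / a) \<le> d"
    using graphs n(1) by blast
  have n_powr: "u powr (a * p) / 2 \<le> n powr p" if "0 \<le> p" "p \<le> 1" for p
    using powr_nat_floor_ge_half[of "u powr a" p] u that a unfolding n_def
    by (simp add: powr_powr ge_one_powr_ge_zero)
  have u_eq: "u = eps * real t / (ln t)\<^sup>2" by (simp add: u_def)
  have "t * n powr (1 - \<beta>) / (4 * exp 1 * K) - 1 \<le> ramsey s t"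
    using eps K u(1) t(1-4) a n_powr[of \<beta>] \<beta>(1,2) n(2-4)
    by (intro ramsey_lower_bound_from_graph[OF G c _ \<beta>_def _ _ _ _ u_eq]) auto
  moreover have "t * (u ^ (s - 2) / 2) / (4 * exp 1 * K) \<le> t * n powr (1 - \<beta>) / (4 * exp 1 * K)"
    using n_powr[of "1 - \<beta>"] \<beta> u K by (intro divide_right_mono mult_left_mono) (auto simp: powr_realpow)
  moreover have "t * u ^ (s - 2) = eps ^ (s - 2) * (real t ^ (s - 1) / ln t ^ (2 * s - 4))"
  proof -
    have "s - 1 = Suc (s - 2)" using s by simp
    then have "real t * real t ^ (s - 2) = real t ^ (s - 1)" by (simp only: power_Suc)
    moreover have "((ln t)\<^sup>2) ^ (s - 2) = ln t ^ (2 * s - 4)"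
      by (simp flip: power_mult add: diff_mult_distrib2)
    ultimately show ?thesis unfolding u_def by (simp add: power_divide power_mult_distrib field_simps)
  qed
  ultimately have "eps ^ (s - 2) / (8 * exp 1 * K) * (real t ^ (s - 1) / ln t ^ (2 * s - 4)) - 1
      \<le> ramsey s t"
    by (simp add: field_simps)
  then show ?thesis using t(5) by simp
qed

lemma eventually_power_div_ln_power_ge:
  "eventually (\<lambda>x::real. B \<le> x ^ (k + 1) / ln x ^ (2 * k)) at_top"
proof -
  have "eventually (\<lambda>x::real. max B 1 \<le> x \<and> 1 \<le> x / ln x ^ 2) at_top"
    by (intro eventually_conj eventually_ge_at_top) real_asymp
  then show ?thesis
  proof (rule eventually_mono)
    fix x :: real assume x: "max B 1 \<le> x \<and> 1 \<le> x / ln x ^ 2"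
    then have "x * 1 \<le> x * (x / ln x ^ 2) ^ k"
      by (intro mult_left_mono one_le_power) auto
    also have "\<dots> = x ^ (k + 1) / ln x ^ (2 * k)"
      by (simp add: power_divide power_mult)
    finally show "B \<le> x ^ (k + 1) / ln x ^ (2 * k)" using x by simp
  qed
qed

lemma eventually_ramsey_parameters:
  fixes s :: nat and eps U a B :: real
  assumes "2 \<le> s" "0 < eps"
  shows "eventually (\<lambda>t. exp 1 \<le> real t \<and> U \<le> eps * t / (ln t)\<^sup>2 \<and>
      2 * real t \<le> (eps * t / (ln t)\<^sup>2)\<^sup>2 \<and> a * ln t \<le> t / 4 \<and>
      B \<le> real t ^ (s - 1) / ln t ^ (2 * s - 4)) sequentially"
proof -
  have "s - 2 + 1 = s - 1" "2 * (s - 2) = 2 * s - 4" using assms(1) by auto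
  then have "eventually (\<lambda>x. exp 1 \<le> x \<and> U \<le> eps * x / (ln x)\<^sup>2 \<and>
      2 * x \<le> (eps * x / (ln x)\<^sup>2)\<^sup>2 \<and> a * ln x \<le> x / 4 \<and>
      B \<le> x ^ (s - 1) / ln x ^ (2 * s - 4)) at_top"
    using assms(2) eventually_power_div_ln_power_ge[of B "s - 2"]
    by (intro eventually_conj) (real_asymp | simp)+
  from eventually_compose_filterlim[OF this filterlim_real_sequentially] show ?thesis .
qed

theorem theorem4:
  fixes s :: nat and C c :: real
  assumes "s \<ge> 3" and "C > 0" and "c > 0"
    and "\<exists>N. \<forall>n\<ge>N. \<exists>d lam E. ndl_graph n d lam E \<and> \<not> has_clique n E s \<and>
            lam \<le> C * sqrt (real d) \<and>
            real d \<ge> c * real n powr (1 - 1 / (2 * real s - 3))"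
  shows "\<exists>c' > 0. \<exists>T. \<forall>t\<ge>T.
           real (ramsey s t) \<ge> c' * real t ^ (s - 1) / (ln (real t)) ^ (2 * s - 4)"
proof -
  obtain N0 where graphs: "\<forall>n\<ge>N0. \<exists>d lam E. ndl_graph n d lam E \<and> \<not> has_clique n E s \<and>
      lam \<le> C * sqrt (real d) \<and> real d \<ge> c * real n powr (1 - 1 / (2 * real s - 3))"
    using assms(4) by blast
  define a where "a = 2 * real s - 3"
  define eps where "eps = min 1 (c / (8 * a\<^sup>2))"
  define K where "K = max 1 (2 * C / sqrt c)"
  define c1 where "c1 = eps ^ (s - 2) / (8 * exp 1 * K)"
  have "3 \<le> a" using assms(1) by (simp add: a_def)
  then have eps: "0 < eps" and c1: "0 < c1" using assms(3) by (auto simp: eps_def c1_def K_def)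
  have "2 \<le> s" using assms(1) by simp
  from eventually_ramsey_parameters[OF this eps, of "N0 + 3 + K powr (2 * a / (a - 1))" a "2 / c1"]
  have "eventually (\<lambda>t. c1 / 2 * (real t ^ (s - 1) / ln t ^ (2 * s - 4)) \<le> ramsey s t) sequentially"
  proof (elim eventually_mono conjE)
    fix t :: nat
    assume t: "exp 1 \<le> real t" "N0 + 3 + K powr (2 * a / (a - 1)) \<le> eps * t / (ln t)\<^sup>2"
      "2 * real t \<le> (eps * t / (ln t)\<^sup>2)\<^sup>2" "a * ln t \<le> t / 4"
      "2 / c1 \<le> real t ^ (s - 1) / ln t ^ (2 * s - 4)"
    have "2 \<le> c1 * (real t ^ (s - 1) / ln t ^ (2 * s - 4))"
      using t(5) c1 by (simp add: pos_divide_le_eq mult.commute)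
    with t(1-4) show "c1 / 2 * (real t ^ (s - 1) / ln t ^ (2 * s - 4)) \<le> ramsey s t"
      unfolding c1_def using assms(1-3) graphs
      by (intro ramsey_lower_bound_at) (auto simp: a_def eps_def K_def)
  qed
  then show ?thesis using c1 unfolding eventually_sequentially
    by (intro exI[of _ "c1 / 2"]) (auto simp: times_divide_eq_right)
qed

end
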